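(* Let $m\ge1$ divide $n$, let $\epsilon_m=e^{2\pi\sqrt{-1}/m}$ and $\Psi_m(X_0,\dots,X_{m-1})=\prod_{i\in(\mathbb Z/m\mathbb Z)^\times}\bigl(\sum_{j\in\mathbb Z/m\mathbb Z}\epsilon_m^{ij}X_j\bigr)$. Let $S_n$ act on $\mathbb C[X_0,\dots,X_{n-1}]$ by permuting the indices $\{0,\dots,n-1\}$ (i.e. $\sigma(X_j)=X_{\sigma(j)}$), and similarly $S_m$ on $\mathbb C[X_0,\dots,X_{m-1}]$. Let $Y_i=\sum_{j=0}^{n/m-1}X_{i+mj}$ for $0\le i\le m-1$. Then \[ \mathrm{Stab}\bigl(\Psi_m(Y_0,\dots,Y_{m-1})\bigr)=\mathrm{Stab}(\Psi_m)\wr S_{n/m}, \] where stabilizers are taken in $S_n$ and $S_m$ respectively.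
   Context: For a subgroup $G\le S_m$ (acting on $\{0,\dots,m-1\}$), $G\wr S_{n/m}$ denotes the subgroup of $S_n$ consisting of the permutations $(\sigma;\sigma_0,\dots,\sigma_{m-1})$ with $\sigma\in G$ and $\sigma_i\in S_{n/m}$ (acting on $\{0,\dots,n/m-1\}$), where $(\sigma;\sigma_0,\dots,\sigma_{m-1})$ maps $i+mj$ to $\sigma(i)+m\sigma_i(j)$ for $0\le i\le m-1$, $0\le j\le n/m-1$. $\mathrm{Stab}(F)$ denotes the set of permutations fixing the polynomial $F$. *)

theory Defs
  imports Complex_Main "HOL-Combinatorics.Permutations"
begin

text \<open>Polynomials over the complex numbers are represented by their polynomial functions
  (an infinite field, so polynomials and polynomial functions correspond bijectively).
  A point is a function x :: nat => complex; only the coordinates below the number of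
  variables matter.\<close>

definition eps :: "nat \<Rightarrow> complex" where
  "eps m = cis (2 * pi / real m)"

definition Psi :: "nat \<Rightarrow> (nat \<Rightarrow> complex) \<Rightarrow> complex" where
  "Psi m x = (\<Prod>i\<in>{i. i < m \<and> coprime i m}. \<Sum>j<m. eps m ^ (i * j) * x j)"

definition Yvars :: "nat \<Rightarrow> nat \<Rightarrow> (nat \<Rightarrow> complex) \<Rightarrow> nat \<Rightarrow> complex" where
  "Yvars m n x i = (\<Sum>j<n div m. x (i + m * j))"

text \<open>sigma acts by X_j |-> X_{sigma j}, i.e. (sigma F)(x) = F(x o sigma).
  Stab N F: permutations of {0..N-1} fixing F.\<close>
definition Stab :: "nat \<Rightarrow> ((nat \<Rightarrow> complex) \<Rightarrow> complex) \<Rightarrow> (nat \<Rightarrow> nat) set" where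
  "Stab N F = {\<sigma>. \<sigma> permutes {..<N} \<and> (\<forall>x. F (x \<circ> \<sigma>) = F x)}"

definition wreath :: "nat \<Rightarrow> nat \<Rightarrow> (nat \<Rightarrow> nat) set \<Rightarrow> (nat \<Rightarrow> nat) set" where
  "wreath m n G = {\<tau>. \<tau> permutes {..<n} \<and>
     (\<exists>\<sigma>\<in>G. \<exists>s. (\<forall>i<m. s i permutes {..<n div m}) \<and>
        (\<forall>i<m. \<forall>j<n div m. \<tau> (i + m * j) = \<sigma> i + m * s i j))}"

end

theory Submission
  imports Defs "HOL-Number_Theory.Cong" "HOL-Analysis.Complex_Transcendental"
begin

text \<open>At the test vector X_a - X_b the variables Y_i become the coordinates of
  X_(a mod m) - X_(b mod m), so Psi_m(Y) takes the value prod_i (eps_m^(ia) - eps_m^(ib)) over the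
  units i mod m; as eps_m is a primitive m-th root of unity and i is a unit, this vanishes iff
  a = b (mod m). Hence a permutation stabilising Psi_m(Y) respects congruence mod m in both
  directions, i.e. it is a block permutation (sigma; sigma_0, ..., sigma_(m-1)). A block permutation
  acts on the Y_i through sigma alone, and every point of C^m is a value of Y; so it fixes
  Psi_m(Y) iff sigma fixes Psi_m.\<close>

lemma eps_power_eq_iff:
  assumes "m \<ge> 1"
  shows "eps m ^ a = eps m ^ b \<longleftrightarrow> a mod m = b mod m"
proof -
  have "eps m ^ k = exp (2 * of_real pi * \<i> * of_nat k / of_nat m)" for k
  proof -
    have "eps m ^ k = cis (real k * (2 * pi / real m))"
      unfolding eps_def by (rule Complex.DeMoivre)
    then show ?thesis by (simp add: cis_conv_exp field_simps)
  qed
  then show ?thesis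
    using complex_root_unity_eq[OF assms] by presburger
qed

lemma Psi_cong: "(\<And>i. i < m \<Longrightarrow> y i = z i) \<Longrightarrow> Psi m y = Psi m z"
  unfolding Psi_def by (intro prod.cong sum.cong) auto

lemma Psi_indicator_diff_eq_0_iff:
  assumes "p < m" "q < m"
  shows "Psi m (indicator {p} - indicator {q}) = 0 \<longleftrightarrow> p = q"
proof -
  let ?U = "{i. i < m \<and> coprime i m}"
  have factor: "(\<Sum>j<m. eps m ^ (i * j) * (indicator {p} - indicator {q}) j)
      = eps m ^ (i * p) - eps m ^ (i * q)" for i
    using assms
    by (simp add: right_diff_distrib sum_subtractf indicator_def if_distrib[of "\<lambda>x. _ * x"])
  have "Psi m (indicator {p} - indicator {q}) = 0 \<longleftrightarrow>
      (\<exists>i\<in>?U. eps m ^ (i * p) = eps m ^ (i * q))"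
    unfolding Psi_def factor by (subst prod_zero_iff) auto
  also have "\<dots> \<longleftrightarrow> (\<exists>i\<in>?U. p mod m = q mod m)"
    using assms eps_power_eq_iff[of m] cong_mult_lcancel_nat[of _ m p q]
    by (auto simp: cong_def)
  also have "\<dots> \<longleftrightarrow> p = q"
  proof -
    have "m - 1 \<in> ?U" using assms coprime_diff_one_left_nat[of m] by simp
    with assms show ?thesis by (simp only: mod_less) blast
  qed
  finally show ?thesis .
qed

lemma Yvars_diff: "Yvars m n (f - g) i = Yvars m n f i - Yvars m n g i"
  unfolding Yvars_def by (simp add: sum_subtractf)

lemma Yvars_indicator:
  assumes "m dvd n" "c < n" "i < m"
  shows "Yvars m n (indicator {c}) i = indicator {c mod m} i"
proof -
  have block_index: "i + m * j = c \<longleftrightarrow> j = c div m \<and> i = c mod m" for j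
    using assms(3) by auto
  have "c div m < n div m"
    using assms by (auto simp: div_less_iff_less_mult elim!: dvdE)
  then show ?thesis
    unfolding Yvars_def indicator_def by (simp add: block_index sum.delta)
qed

lemma Yvars_extend_by_zero:
  assumes "0 < n div m" "i < m"
  shows "Yvars m n (\<lambda>k. if k < m then y k else 0) i = y i"
proof -
  have "Yvars m n (\<lambda>k. if k < m then y k else 0) i = (\<Sum>j<n div m. if j = 0 then y i else 0)"
    unfolding Yvars_def using assms(2) by (intro sum.cong) (auto simp: gr0_conv_Suc)
  with assms(1) show ?thesis by simp
qed

lemma Yvars_comp_block_permutation:
  assumes "\<forall>i<m. s i permutes {..<n div m}"
    and "\<forall>i<m. \<forall>j<n div m. \<tau> (i + m * j) = \<sigma> i + m * s i j" and "i < m"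
  shows "Yvars m n (x \<circ> \<tau>) i = Yvars m n x (\<sigma> i)"
proof -
  have "Yvars m n (x \<circ> \<tau>) i = (\<Sum>j<n div m. ((\<lambda>j. x (\<sigma> i + m * j)) \<circ> s i) j)"
    unfolding Yvars_def using assms by (intro sum.cong) auto
  also have "\<dots> = Yvars m n x (\<sigma> i)"
    unfolding Yvars_def using sum.permute assms(1,3) by metis
  finally show ?thesis .
qed

lemma Stab_Psi_Yvars_preserves_mod:
  assumes "m dvd n" "\<tau> \<in> Stab n (\<lambda>x. Psi m (Yvars m n x))" "a < n" "b < n"
  shows "\<tau> a mod m = \<tau> b mod m \<longleftrightarrow> a mod m = b mod m"
proof -
  have perm: "\<tau> permutes {..<n}"
    and invariant: "\<And>x. Psi m (Yvars m n (x \<circ> \<tau>)) = Psi m (Yvars m n x)"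
    using assms(2) unfolding Stab_def by auto
  have "m > 0" using assms(1,3) by (auto intro: Nat.gr0I)
  have "\<tau> a < n" "\<tau> b < n"
    using perm assms(3,4) permutes_in_image by fastforce+
  have Psi_test: "Psi m (Yvars m n (indicator {c} - indicator {d})) = 0 \<longleftrightarrow> c mod m = d mod m"
    if "c < n" "d < n" for c d
  proof -
    have "Psi m (Yvars m n (indicator {c} - indicator {d}))
        = Psi m (indicator {c mod m} - indicator {d mod m})"
      using that assms(1) by (intro Psi_cong) (simp add: Yvars_diff Yvars_indicator)
    with \<open>m > 0\<close> show ?thesis by (simp add: Psi_indicator_diff_eq_0_iff)
  qed
  have "(indicator {\<tau> a} - indicator {\<tau> b}) \<circ> \<tau> = (indicator {a} - indicator {b} :: nat \<Rightarrow> complex)"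
    using permutes_inj[OF perm] by (auto simp: indicator_def inj_eq)
  then show ?thesis
    using invariant[of "indicator {\<tau> a} - indicator {\<tau> b}"] Psi_test
      \<open>\<tau> a < n\<close> \<open>\<tau> b < n\<close> assms(3,4)
    by metis
qed

lemma inj_on_endo_permutes:
  assumes "finite A" "f ` A \<subseteq> A" "inj_on f A" "\<And>x. x \<notin> A \<Longrightarrow> f x = x"
  shows "f permutes A"
  using assms endo_inj_surj[OF assms(1-3)] by (intro bij_imp_permutes) (auto simp: bij_betw_def)

lemma mod_preserving_permutation_block_decomposition:
  fixes \<tau> :: "nat \<Rightarrow> nat"
  assumes "0 < m" "0 < N" "\<tau> permutes {..<m * N}"
    and mod_iff: "\<And>a b. a < m * N \<Longrightarrow> b < m * N \<Longrightarrow> \<tau> a mod m = \<tau> b mod m \<longleftrightarrow> a mod m = b mod m"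
  obtains \<sigma> s where "\<sigma> permutes {..<m}" "\<forall>i<m. s i permutes {..<N}"
    "\<forall>i<m. \<forall>j<N. \<tau> (i + m * j) = \<sigma> i + m * s i j"
proof -
  have in_range: "i + m * j < m * N" if "i < m" "j < N" for i j
  proof -
    have "i + m * j < m * (j + 1)" using that by simp
    also have "\<dots> \<le> m * N" using that by (intro mult_le_mono2) simp
    finally show ?thesis .
  qed
  have \<tau>_range: "\<tau> k < m * N" if "k < m * N" for k
    using assms(3) that permutes_in_image by fastforce
  define \<sigma> where "\<sigma> i = (if i < m then \<tau> i mod m else i)" for i
  define s where "s i j = (if j < N then \<tau> (i + m * j) div m else j)" for i j
  have "\<sigma> permutes {..<m}"
  proof (rule inj_on_endo_permutes)
    show "inj_on \<sigma> {..<m}"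
      using mod_iff in_range[of _ 0] assms(2) by (intro inj_onI) (auto simp: \<sigma>_def)
  qed (use assms(1) in \<open>auto simp: \<sigma>_def\<close>)
  moreover have "s i permutes {..<N}" if "i < m" for i
  proof (rule inj_on_endo_permutes)
    show "inj_on (s i) {..<N}"
    proof (rule inj_onI)
      fix j j' assume j: "j \<in> {..<N}" "j' \<in> {..<N}" and "s i j = s i j'"
      then have "\<tau> (i + m * j) div m = \<tau> (i + m * j') div m"
        by (simp add: s_def)
      moreover have "\<tau> (i + m * j) mod m = \<tau> (i + m * j') mod m"
        using j \<open>i < m\<close> by (simp add: mod_iff in_range)
      ultimately have "\<tau> (i + m * j) = \<tau> (i + m * j')"
        by (metis div_mod_decomp)
      then show "j = j'"
        using permutes_inj[OF assms(3)] assms(1) by (simp add: inj_eq)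
    qed
    show "s i ` {..<N} \<subseteq> {..<N}"
      using \<tau>_range in_range \<open>i < m\<close>
      by (auto simp: s_def div_less_iff_less_mult mult.commute assms(1))
  qed (auto simp: s_def)
  moreover have "\<tau> (i + m * j) = \<sigma> i + m * s i j" if "i < m" "j < N" for i j
  proof -
    have "\<tau> (i + m * j) mod m = \<tau> i mod m"
      using that in_range[of i j] in_range[of i 0] assms(2) by (simp add: mod_iff)
    then show ?thesis
      using that mod_mult_div_eq[of "\<tau> (i + m * j)" m] by (simp add: \<sigma>_def s_def)
  qed
  ultimately show ?thesis using that by blast
qed

lemma id_in_wreath: "id \<in> G \<Longrightarrow> id \<in> wreath m n G"
  unfolding wreath_def by (auto intro!: bexI[of _ id] exI[of _ "\<lambda>_. id"])

lemma wreath_subset_Stab_Psi_Yvars: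
  "wreath m n (Stab m (Psi m)) \<subseteq> Stab n (\<lambda>x. Psi m (Yvars m n x))"
proof
  fix \<tau> assume "\<tau> \<in> wreath m n (Stab m (Psi m))"
  then obtain \<sigma> s where perm: "\<tau> permutes {..<n}" and \<sigma>: "\<sigma> \<in> Stab m (Psi m)"
    and s: "\<forall>i<m. s i permutes {..<n div m}"
    and block: "\<forall>i<m. \<forall>j<n div m. \<tau> (i + m * j) = \<sigma> i + m * s i j"
    unfolding wreath_def by blast
  have "Psi m (Yvars m n (x \<circ> \<tau>)) = Psi m (Yvars m n x)" for x
  proof -
    have "Psi m (Yvars m n (x \<circ> \<tau>)) = Psi m (Yvars m n x \<circ> \<sigma>)"
      using Yvars_comp_block_permutation[OF s block] by (intro Psi_cong) simp
    also have "\<dots> = Psi m (Yvars m n x)"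
      using \<sigma> unfolding Stab_def by blast
    finally show ?thesis .
  qed
  with perm show "\<tau> \<in> Stab n (\<lambda>x. Psi m (Yvars m n x))"
    unfolding Stab_def by blast
qed

lemma Stab_Psi_Yvars_subset_wreath:
  assumes "m \<ge> 1" "m dvd n"
  shows "Stab n (\<lambda>x. Psi m (Yvars m n x)) \<subseteq> wreath m n (Stab m (Psi m))"
proof
  fix \<tau> assume \<tau>: "\<tau> \<in> Stab n (\<lambda>x. Psi m (Yvars m n x))"
  then have perm: "\<tau> permutes {..<n}"
    and invariant: "\<And>x. Psi m (Yvars m n (x \<circ> \<tau>)) = Psi m (Yvars m n x)"
    unfolding Stab_def by auto
  show "\<tau> \<in> wreath m n (Stab m (Psi m))"
  proof (cases "n = 0")
    case True
    with perm have "\<tau> = id" by (simp add: permutes_empty)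
    then show ?thesis
      by (simp add: id_in_wreath Stab_def permutes_id)
  next
    case False
    with assms have N: "0 < n div m" "m * (n div m) = n"
      by (auto elim!: dvdE)
    obtain \<sigma> s where \<sigma>: "\<sigma> permutes {..<m}" and s: "\<forall>i<m. s i permutes {..<n div m}"
      and block: "\<forall>i<m. \<forall>j<n div m. \<tau> (i + m * j) = \<sigma> i + m * s i j"
      using mod_preserving_permutation_block_decomposition[of m "n div m" \<tau>]
        assms N perm Stab_Psi_Yvars_preserves_mod[OF assms(2) \<tau>] by auto
    have "Psi m (y \<circ> \<sigma>) = Psi m y" for y
    proof -
      define x where "x = (\<lambda>k. if k < m then y k else 0)"
      have "Psi m (y \<circ> \<sigma>) = Psi m (Yvars m n (x \<circ> \<tau>))"
        using Yvars_comp_block_permutation[OF s block] Yvars_extend_by_zero[OF N(1)]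
          permutes_in_image[OF \<sigma>]
        by (intro Psi_cong) (simp add: x_def)
      also have "\<dots> = Psi m (Yvars m n x)" by (rule invariant)
      also have "\<dots> = Psi m y"
        using Yvars_extend_by_zero[OF N(1)] by (intro Psi_cong) (simp add: x_def)
      finally show ?thesis .
    qed
    with \<sigma> have "\<sigma> \<in> Stab m (Psi m)" unfolding Stab_def by blast
    with perm s block show ?thesis unfolding wreath_def by blast
  qed
qed

theorem lemma2p2:
  fixes m n :: nat
  assumes "m \<ge> 1" and "m dvd n"
  shows "Stab n (\<lambda>x. Psi m (Yvars m n x)) = wreath m n (Stab m (Psi m))"
  using Stab_Psi_Yvars_subset_wreath[OF assms] wreath_subset_Stab_Psi_Yvars by (rule equalityI)

end
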